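(* Consider the setting described in the context, and assume $\operatorname{supp}(f_{(0,0)})=\mathcal{U}$. Fix a radius $r>0$. Then there exists a constant $\delta_r>0$, depending on $\operatorname{diam}(\mathcal{U}),\sigma,d,f_{(0,0)}$ (and not on $n$ or $k$), such that for all $n\in\mathbb{N}_0$ and all $k\in\{0,\dots,\bar k\}$, $$f_{(n,k)}\big(B_r(u^*_{(n)})\big)\ge\delta_r .$$
   Context: Setting: $d,m\ge1$; $\mathcal{X}\subseteq\mathbb{R}^m$; $u_{\min}<u_{\max}$ in $\mathbb{R}^d$ (componentwise) and $\mathcal{U}=\{u\in\mathbb{R}^d:u_{\min}\le u\le u_{\max}\}$; $\operatorname{proj}_{\mathcal{U}}(v)=\operatorname{argmin}_{u\in\mathcal{U}}|u-v|$. The transition map is $\Phi(x,u)=\Phi_s(x)+F_cu$ with $\Phi_s:\mathcal{X}\to\mathcal{X}$, $F_c\in\mathbb{R}^{m\times d}$, $\nu>0$, and $A=F_c^\top F_c+\nu I_d$ of full rank. A reference $x^{\mathrm{ref}}(t_n)\in\mathcal{X}$ is given at times $t_n=n\Delta t$. For a state $x_{(n)}\in\mathcal{X}$, $L_n(u)=|\Phi_s(x_{(n)})+F_cu-x^{\mathrm{ref}}(t_{n+1})|^2+\nu|u|^2$ and $u^*_{(n)}$ is its unique minimizer over $\mathcal{U}$. For a probability measure $f$ on $\mathbb{R}^d$ and $\alpha>0$, $m^\alpha_{L_n}[f]=\int u e^{-\alpha L_n(u)}f(du)/\int e^{-\alpha L_n(u)}f(du)$. Parameters: $\alpha,\lambda,\sigma,\tau>0$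 with $\lambda\tau\in(0,1)$, $\bar k\in\mathbb{N}$. Mean-field MPC–CBO dynamics: given $x_{(0)}\in\mathcal{X}$ and a probability measure $f_{(0,0)}$ on $\mathbb{R}^d$, for each $n\in\mathbb{N}_0$ and $k=0,\dots,\bar k-1$ let $f_{(n,k+1)}$ be the law of $\operatorname{proj}_{\mathcal{U}}\big(\bar U+\lambda\tau(m^\alpha_{L_n}[f_{(n,k)}]-\bar U)+\sigma\sqrt\tau\,\theta\big)$, where $\bar U\sim f_{(n,k)}$ and $\theta\sim\mathcal{N}(0,I_d)$ are independent; then $u_{(n)}=m^\alpha_{L_n}[f_{(n,\bar k)}]$, $x_{(n+1)}=\Phi_s(x_{(n)})+F_cu_{(n)}$, and $f_{(n+1,0)}=f_{(n,\bar k)}$. $B_r(v)$ denotes the Euclidean ball of radius $r$ about $v$. *)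

theory Defs
  imports "HOL-Probability.Probability"
begin

definition msupp :: "'a::metric_space measure \<Rightarrow> 'a set" where
  "msupp \<mu> = {x. \<forall>e>0. emeasure \<mu> (ball x e) > 0}"

definition std_gauss :: "(real^'d) measure" where
  "std_gauss = density lborel
     (\<lambda>\<theta>. ennreal ((2 * pi) powr (- real CARD('d) / 2) * exp (- (norm \<theta>)\<^sup>2 / 2)))"

definition cons_point :: "real \<Rightarrow> ('a::euclidean_space \<Rightarrow> real) \<Rightarrow> 'a measure \<Rightarrow> 'a" where
  "cons_point \<alpha> L \<mu> =
     (\<integral>u. exp (- \<alpha> * L u) *\<^sub>R u \<partial>\<mu>) /\<^sub>R (\<integral>u. exp (- \<alpha> * L u) \<partial>\<mu>)"

definition box_set :: "real^'d \<Rightarrow> real^'d \<Rightarrow> (real^'d) set" where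
  "box_set umin umax = {u. umin \<le> u \<and> u \<le> umax}"

definition mpc_cost ::
  "(real^'m \<Rightarrow> real^'m) \<Rightarrow> real^'d^'m \<Rightarrow> real \<Rightarrow> real^'m \<Rightarrow> real^'m \<Rightarrow> real^'d \<Rightarrow> real" where
  "mpc_cost \<Phi>s Fc \<nu> x xr u = (norm (\<Phi>s x + Fc *v u - xr))\<^sup>2 + \<nu> * (norm u)\<^sup>2"

end

theory Submission
  imports Defs
begin

(* For k >= 1 the law f_(n,k) is the image of f_(n,k-1) (x) N(0,I) under
   (v, theta) |-> proj_U (w + s theta) with w = v + lam tau (m - v) and s = sigma sqrt tau.
   The consensus point m is a weighted mean of a measure carried by the box U, so m and
   hence w lie in U.  The projection is 1-Lipschitz and fixes every u in U, so the result
   falls into B_r(u) as soon as theta lies in the ball of radius r/s around (u - w)/s; that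
   centre has norm at most diam U / s, and Gaussian balls of fixed radius whose centres
   stay bounded have uniformly positive mass.  For k = 0 the law is either f_(n-1,kbar),
   covered by the previous case since kbar >= 1, or f_(0,0), whose support is the compact
   set U, so finitely many balls of radius r/2 show that all r-balls centred in U have
   mass bounded away from 0. *)

section \<open>The standard Gaussian\<close>

lemma nn_integral_std_gauss_density:
  "(\<integral>\<^sup>+\<theta>. ennreal ((2 * pi) powr (- real DIM('a) / 2) * exp (- (norm (\<theta>::'a::euclidean_space))\<^sup>2 / 2))
     \<partial>lborel) = 1"
proof -
  have "1 / sqrt (2 * pi) = (2 * pi) powr (- 1 / 2)"
    by (simp add: powr_minus_divide powr_half_sqrt)
  then have const: "(\<Prod>b\<in>(Basis::'a set). 1 / sqrt (2 * pi)) = (2 * pi) powr (- real DIM('a) / 2)"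
    by (simp add: powr_power)
  have density_eq_prod: "(2 * pi) powr (- real DIM('a) / 2) * exp (- (norm \<theta>)\<^sup>2 / 2)
      = (\<Prod>b\<in>(Basis::'a set). std_normal_density (\<theta> \<bullet> b))" for \<theta> :: 'a
  proof -
    have "(norm \<theta>)\<^sup>2 = (\<Sum>b\<in>Basis. (\<theta> \<bullet> b)\<^sup>2)"
      unfolding power2_norm_eq_inner by (subst euclidean_inner) (simp add: power2_eq_square)
    then have "exp (- (norm \<theta>)\<^sup>2 / 2) = (\<Prod>b\<in>Basis. exp (- (\<theta> \<bullet> b)\<^sup>2 / 2))"
      by (simp add: exp_sum[symmetric] sum_negf sum_divide_distrib)
    then show ?thesis
      unfolding std_normal_density_def prod.distrib const[symmetric] by (simp only:)
  qed
  have std_normal: "(\<integral>\<^sup>+x. ennreal (std_normal_density x) \<partial>lborel) = 1"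
  proof -
    interpret prob_space "density lborel (\<lambda>x. ennreal (std_normal_density x))"
      by (rule prob_space_normal_density) simp
    show ?thesis using emeasure_space_1 by (simp add: emeasure_density)
  qed
  have "(\<integral>\<^sup>+\<theta>. ennreal ((2 * pi) powr (- real DIM('a) / 2) * exp (- (norm (\<theta>::'a))\<^sup>2 / 2)) \<partial>lborel)
      = (\<integral>\<^sup>+\<theta>. (\<Prod>b\<in>Basis. ennreal (std_normal_density ((\<theta>::'a) \<bullet> b))) \<partial>lborel)"
    unfolding density_eq_prod by (simp add: prod_ennreal)
  also have "\<dots> = (\<Prod>b\<in>(Basis::'a set). \<integral>\<^sup>+x. ennreal (std_normal_density x) \<partial>lborel)"
    by (rule nn_integral_lborel_prod) auto
  finally show ?thesis
    by (simp add: std_normal)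
qed

lemma sets_std_gauss [simp]: "sets (std_gauss :: (real^'d) measure) = sets borel"
  unfolding std_gauss_def by simp

lemma space_std_gauss [simp]: "space (std_gauss :: (real^'d) measure) = UNIV"
  unfolding std_gauss_def by simp

lemma prob_space_std_gauss: "prob_space (std_gauss :: (real^'d) measure)"
  using nn_integral_std_gauss_density[where 'a="real^'d"]
  by (intro prob_spaceI) (simp add: std_gauss_def emeasure_density)

lemma std_gauss_ball_lower_bound:
  fixes D \<rho> :: real
  assumes "\<rho> > 0"
  shows "\<exists>c>0. \<forall>p::real^'d. norm p \<le> D \<longrightarrow> c \<le> measure std_gauss (ball p \<rho>)"
proof -
  interpret G: prob_space "std_gauss :: (real^'d) measure" by (rule prob_space_std_gauss)
  define c0 where "c0 = (2 * pi) powr (- real CARD('d) / 2) * exp (- (\<bar>D\<bar> + \<rho>)\<^sup>2 / 2)"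
  define V where "V = unit_ball_vol (real CARD('d)) * \<rho> ^ CARD('d)"
  have "c0 > 0" "V > 0" using assms unfolding c0_def V_def by simp_all
  moreover have "c0 * V \<le> measure std_gauss (ball p \<rho>)" if "norm p \<le> D" for p :: "real^'d"
  proof -
    have "emeasure lborel (ball p \<rho>) = ennreal V"
      unfolding V_def using emeasure_ball[where c=p and r=\<rho>] assms by simp
    then have "ennreal (c0 * V) = (\<integral>\<^sup>+\<theta>. ennreal c0 * indicator (ball p \<rho>) \<theta> \<partial>lborel)"
      using \<open>c0 > 0\<close> \<open>V > 0\<close> by (subst nn_integral_cmult_indicator) (auto simp: ennreal_mult)
    also have "\<dots> \<le> (\<integral>\<^sup>+\<theta>. ennreal ((2 * pi) powr (- real CARD('d) / 2) * exp (- (norm \<theta>)\<^sup>2 / 2))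
        * indicator (ball p \<rho>) \<theta> \<partial>lborel)"
    proof (intro nn_integral_mono)
      fix \<theta> :: "real^'d"
      have "(norm \<theta>)\<^sup>2 \<le> (\<bar>D\<bar> + \<rho>)\<^sup>2" if "\<theta> \<in> ball p \<rho>"
        using that \<open>norm p \<le> D\<close> norm_triangle_ineq[of p "\<theta> - p"]
        by (intro power_mono) (auto simp: dist_norm norm_minus_commute)
      then show "ennreal c0 * indicator (ball p \<rho>) \<theta>
          \<le> ennreal ((2 * pi) powr (- real CARD('d) / 2) * exp (- (norm \<theta>)\<^sup>2 / 2)) * indicator (ball p \<rho>) \<theta>"
        unfolding c0_def by (auto simp: indicator_def intro!: ennreal_leI mult_left_mono)
    qed
    also have "\<dots> = emeasure std_gauss (ball p \<rho>)"
      unfolding std_gauss_def by (simp add: emeasure_density)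
    also have "\<dots> = ennreal (measure std_gauss (ball p \<rho>))"
      by (rule G.emeasure_eq_measure)
    finally show ?thesis
      by (simp add: ennreal_le_iff[OF measure_nonneg])
  qed
  ultimately show ?thesis
    by (intro exI[of _ "c0 * V"]) auto
qed

section \<open>Measures with prescribed support\<close>

lemma AE_in_msupp:
  fixes M :: "'a::{metric_space, second_countable_topology} measure"
  assumes "sets M = sets borel"
  shows "AE x in M. x \<in> msupp M"
proof -
  define N where "N = {ball x e | x e. 0 < e \<and> emeasure M (ball x e) = 0}"
  obtain N' where N': "N' \<subseteq> N" "countable N'" "\<Union>N' = \<Union>N"
    using Lindelof[of N] unfolding N_def by auto
  have "(\<Union>B\<in>N'. B) \<in> null_sets M"
    using N' assms by (intro null_sets_UN') (auto simp: N_def null_sets_def)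
  moreover have "{x \<in> space M. x \<notin> msupp M} \<subseteq> \<Union>N'"
  proof
    fix x assume "x \<in> {x \<in> space M. x \<notin> msupp M}"
    then obtain e where "0 < e" "emeasure M (ball x e) = 0"
      unfolding msupp_def by (auto simp: not_gr_zero)
    then have "ball x e \<in> N"
      unfolding N_def by blast
    then show "x \<in> \<Union>N'"
      using \<open>0 < e\<close> N'(3) by (metis UnionI centre_in_ball)
  qed
  ultimately show ?thesis
    by (intro AE_I'[of "\<Union>N'"]) auto
qed

lemma msupp_uniform_ball_lower_bound:
  fixes M :: "'a::metric_space measure"
  assumes "finite_measure M" "sets M = sets borel" "compact K" "K \<subseteq> msupp M" "0 < r"
  shows "\<exists>\<delta>>0. \<forall>u\<in>K. \<delta> \<le> measure M (ball u r)"
proof -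
  have "K \<subseteq> (\<Union>c\<in>K. ball c (r/2))"
    using \<open>0 < r\<close> by auto
  then obtain C where C: "C \<subseteq> K" "finite C" "K \<subseteq> (\<Union>c\<in>C. ball c (r/2))"
    using compactE_image[OF \<open>compact K\<close>, of K "\<lambda>c. ball c (r/2)"] by blast
  define \<delta> where "\<delta> = Min (insert 1 ((\<lambda>c. measure M (ball c (r/2))) ` C))"
  have "0 < measure M (ball c (r/2))" if "c \<in> C" for c
    using assms(4) C(1) that \<open>0 < r\<close> unfolding msupp_def
    by (auto simp: finite_measure.emeasure_eq_measure[OF assms(1)])
  then have "0 < \<delta>"
    unfolding \<delta>_def using C(2) by simp
  moreover have "\<delta> \<le> measure M (ball u r)" if u: "u \<in> K" for u
  proof -
    obtain c where c: "c \<in> C" "u \<in> ball c (r/2)"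
      using C(3) u by blast
    have "\<delta> \<le> measure M (ball c (r/2))"
      unfolding \<delta>_def using C(2) c(1) by simp
    also have "\<dots> \<le> measure M (ball u r)"
    proof (intro finite_measure.finite_measure_mono[OF assms(1)])
      show "ball c (r/2) \<subseteq> ball u r"
        using c(2) dist_triangle_half_r[of c u] by auto
    qed (simp add: assms(2))
    finally show ?thesis .
  qed
  ultimately show ?thesis
    by blast
qed

section \<open>The consensus point\<close>

lemma weighted_integral_inner_bounds:
  fixes M :: "'a::euclidean_space measure"
  assumes w: "integrable M w" and wx: "integrable M (\<lambda>x. w x *\<^sub>R x)"
    and nonneg: "AE x in M. 0 \<le> w x" and bounds: "AE x in M. c \<le> x \<bullet> i \<and> x \<bullet> i \<le> d"
  shows "c * (\<integral>x. w x \<partial>M) \<le> (\<integral>x. w x *\<^sub>R x \<partial>M) \<bullet> i"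
    and "(\<integral>x. w x *\<^sub>R x \<partial>M) \<bullet> i \<le> d * (\<integral>x. w x \<partial>M)"
proof -
  have component: "(\<integral>x. w x *\<^sub>R x \<partial>M) \<bullet> i = (\<integral>x. w x * (x \<bullet> i) \<partial>M)"
    using integral_inner_left[of i M "\<lambda>x. w x *\<^sub>R x"] wx by simp
  have wxi: "integrable M (\<lambda>x. w x * (x \<bullet> i))"
    using integrable_inner_left[OF wx, of i] by simp
  have pointwise: "AE x in M. c * w x \<le> w x * (x \<bullet> i) \<and> w x * (x \<bullet> i) \<le> d * w x"
    using nonneg bounds by eventually_elim (metis mult.commute mult_right_mono)
  have "(\<integral>x. c * w x \<partial>M) \<le> (\<integral>x. w x * (x \<bullet> i) \<partial>M)"
    using pointwise by (intro integral_mono_AE wxi integrable_mult_right w) (auto elim: eventually_mono)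
  then show "c * (\<integral>x. w x \<partial>M) \<le> (\<integral>x. w x *\<^sub>R x \<partial>M) \<bullet> i"
    by (simp add: component)
  have "(\<integral>x. w x * (x \<bullet> i) \<partial>M) \<le> (\<integral>x. d * w x \<partial>M)"
    using pointwise by (intro integral_mono_AE wxi integrable_mult_right w) (auto elim: eventually_mono)
  then show "(\<integral>x. w x *\<^sub>R x \<partial>M) \<bullet> i \<le> d * (\<integral>x. w x \<partial>M)"
    by (simp add: component)
qed

lemma cons_point_in_cbox:
  fixes M :: "'a::euclidean_space measure"
  assumes "prob_space M" "sets M = sets borel" "AE x in M. x \<in> cbox a b"
    and "L \<in> borel_measurable borel" "\<forall>u. 0 \<le> L u" "0 \<le> \<alpha>"
  shows "cons_point \<alpha> L M \<in> cbox a b"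
proof -
  interpret prob_space M by fact
  define w where "w u = exp (- \<alpha> * L u)" for u
  have w_pos: "0 < w u" and w_le_1: "w u \<le> 1" for u
    using assms(5,6) unfolding w_def by auto
  have [measurable]: "L \<in> borel_measurable M"
    using assms(4) by (simp add: measurable_cong_sets[OF assms(2) refl])
  then have w_meas: "w \<in> borel_measurable M"
    unfolding w_def by measurable
  obtain B where B: "\<forall>x\<in>cbox a b. norm x \<le> B"
    using bounded_cbox bounded_iff by blast
  have w_int: "integrable M w"
    using w_meas w_pos w_le_1 by (intro integrable_const_bound[where B=1]) (auto simp: abs_of_pos)
  have wx_int: "integrable M (\<lambda>x. w x *\<^sub>R x)"
  proof (intro integrable_const_bound[where B=B])
    show "AE x in M. norm (w x *\<^sub>R x) \<le> B"
      using assms(3)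
    proof eventually_elim
      case (elim x)
      have "w x * norm x \<le> norm x"
        using w_pos[of x] w_le_1[of x] by (simp add: mult_left_le_one_le)
      then show ?case
        using B elim w_pos[of x] by (auto simp: abs_of_pos)
    qed
    show "(\<lambda>x. w x *\<^sub>R x) \<in> borel_measurable M"
      using w_meas by (intro borel_measurable_scaleR) (simp_all add: measurable_cong_sets[OF assms(2) refl])
  qed
  define Z where "Z = (\<integral>x. w x \<partial>M)"
  have "0 < Z"
  proof -
    have "Z \<noteq> 0"
    proof
      assume "Z = 0"
      then have "AE x in M. w x = 0"
        unfolding Z_def using integral_nonneg_eq_0_iff_AE[OF w_int] w_pos by (simp add: less_imp_le)
      then show False
        using w_pos by (simp add: less_le)
    qed
    moreover have "0 \<le> Z"
      unfolding Z_def using w_pos by (simp add: less_imp_le)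
    ultimately show ?thesis
      by simp
  qed
  have "cons_point \<alpha> L M = (\<integral>x. w x *\<^sub>R x \<partial>M) /\<^sub>R Z"
    unfolding cons_point_def Z_def w_def ..
  moreover have "a \<bullet> i * Z \<le> (\<integral>x. w x *\<^sub>R x \<partial>M) \<bullet> i \<and> (\<integral>x. w x *\<^sub>R x \<partial>M) \<bullet> i \<le> b \<bullet> i * Z"
    if i: "i \<in> Basis" for i
  proof -
    have "AE x in M. a \<bullet> i \<le> x \<bullet> i \<and> x \<bullet> i \<le> b \<bullet> i"
      using assms(3) i by (auto simp: mem_box elim!: eventually_mono)
    moreover have "AE x in M. 0 \<le> w x"
      using w_pos by (simp add: less_imp_le)
    ultimately show ?thesis
      using weighted_integral_inner_bounds[OF w_int wx_int] unfolding Z_def by blast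
  qed
  ultimately show ?thesis
    using \<open>0 < Z\<close> by (simp add: mem_box field_simps)
qed

lemma box_set_eq_cbox: "box_set a b = cbox a (b::real^'d)"
  unfolding box_set_def interval_cbox_cart[symmetric] by auto

lemma cons_point_mpc_cost_in_box_set:
  assumes "prob_space M" "sets M = sets borel" "AE v in M. v \<in> box_set a b" "0 \<le> \<alpha>" "0 \<le> \<nu>"
  shows "cons_point \<alpha> (mpc_cost \<Phi>s Fc \<nu> x xr) M \<in> box_set a b"
proof -
  have "continuous_on UNIV (mpc_cost \<Phi>s Fc \<nu> x xr)"
    unfolding mpc_cost_def by (intro continuous_intros)
  moreover have "\<forall>u. 0 \<le> mpc_cost \<Phi>s Fc \<nu> x xr u"
    unfolding mpc_cost_def using \<open>0 \<le> \<nu>\<close> by simp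
  ultimately show ?thesis
    using assms unfolding box_set_eq_cbox
    by (intro cons_point_in_cbox borel_measurable_continuous_onI) auto
qed

section \<open>One step of the projected CBO dynamics\<close>

definition cbo_step ::
  "(real^'d) set \<Rightarrow> real \<Rightarrow> real^'d \<Rightarrow> real \<Rightarrow> (real^'d) measure \<Rightarrow> (real^'d) measure" where
  "cbo_step U a m s M =
     distr (M \<Otimes>\<^sub>M std_gauss) borel (\<lambda>(v, \<theta>). closest_point U (v + a *\<^sub>R (m - v) + s *\<^sub>R \<theta>))"

definition borel_prob_on :: "'a::topological_space set \<Rightarrow> 'a measure \<Rightarrow> bool" where
  "borel_prob_on U M \<longleftrightarrow> prob_space M \<and> sets M = sets borel \<and> (AE x in M. x \<in> U)"

lemma measurable_projected_update:
  fixes M :: "(real^'d) measure"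
  assumes "sets M = sets borel" "convex U" "closed U" "U \<noteq> {}"
  shows "(\<lambda>(v, \<theta>). closest_point U (v + a *\<^sub>R (m - v) + s *\<^sub>R \<theta>)) \<in> borel_measurable (M \<Otimes>\<^sub>M std_gauss)"
proof -
  have "sets (M \<Otimes>\<^sub>M std_gauss) = sets (borel :: ((real^'d) \<times> (real^'d)) measure)"
    unfolding borel_prod[symmetric] by (rule sets_pair_measure_cong[OF assms(1) sets_std_gauss])
  moreover have "continuous_on UNIV (\<lambda>(v, \<theta>). closest_point U (v + a *\<^sub>R (m - v) + s *\<^sub>R \<theta>))"
    unfolding case_prod_beta
    by (intro continuous_on_compose2[OF continuous_on_closest_point[OF assms(2-4)]] continuous_intros)
       auto
  ultimately show ?thesis
    using borel_measurable_continuous_onI measurable_cong_sets by blast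
qed

lemma borel_prob_on_cbo_step:
  fixes M :: "(real^'d) measure"
  assumes "borel_prob_on U M" "convex U" "closed U" "U \<noteq> {}"
  shows "borel_prob_on U (cbo_step U a m s M)"
proof -
  interpret M: prob_space M
    using assms(1) by (simp add: borel_prob_on_def)
  interpret G: prob_space "std_gauss :: (real^'d) measure"
    by (rule prob_space_std_gauss)
  interpret pair_prob_space M "std_gauss :: (real^'d) measure" ..
  have F: "(\<lambda>(v, \<theta>). closest_point U (v + a *\<^sub>R (m - v) + s *\<^sub>R \<theta>)) \<in> borel_measurable (M \<Otimes>\<^sub>M std_gauss)"
    using assms by (intro measurable_projected_update) (auto simp: borel_prob_on_def)
  have "AE x in M \<Otimes>\<^sub>M std_gauss. (\<lambda>(v, \<theta>). closest_point U (v + a *\<^sub>R (m - v) + s *\<^sub>R \<theta>)) x \<in> U"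
    using closest_point_in_set[OF assms(3,4)] by (auto intro!: AE_I2)
  then show ?thesis
    using P.prob_space_distr[OF F] F assms(3) unfolding borel_prob_on_def cbo_step_def
    by (simp add: AE_distr_iff)
qed

lemma dist_closest_point_le:
  assumes "convex U" "closed U" "x \<in> U"
  shows "dist x (closest_point U y) \<le> dist x y"
  using closest_point_lipschitz[OF assms(1,2), of x y] closest_point_self[OF assms(3)] assms(3)
  by (auto simp: dist_commute)

lemma ball_subset_closest_point_preimage:
  fixes w :: "'a::euclidean_space"
  assumes "convex U" "closed U" "u \<in> U" "0 < s"
  shows "ball ((1 / s) *\<^sub>R (u - w)) (r / s) \<subseteq> {\<theta>. closest_point U (w + s *\<^sub>R \<theta>) \<in> ball u r}"
proof
  fix \<theta> assume \<theta>: "\<theta> \<in> ball ((1 / s) *\<^sub>R (u - w)) (r / s)"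
  have "dist u (w + s *\<^sub>R \<theta>) = s * dist ((1 / s) *\<^sub>R (u - w)) \<theta>"
  proof -
    have "u - (w + s *\<^sub>R \<theta>) = s *\<^sub>R ((1 / s) *\<^sub>R (u - w) - \<theta>)"
      using assms(4) by (simp add: algebra_simps)
    then show ?thesis
      using assms(4) by (simp add: dist_norm)
  qed
  also have "\<dots> < r"
    using \<theta> assms(4) by (simp add: field_simps)
  finally show "\<theta> \<in> {\<theta>. closest_point U (w + s *\<^sub>R \<theta>) \<in> ball u r}"
    using dist_closest_point_le[OF assms(1-3)] by (auto intro: le_less_trans)
qed

lemma cbo_step_ball_lower_bound:
  fixes M :: "(real^'d) measure"
  assumes M: "borel_prob_on U M" and U: "convex U" "closed U" "bounded U"
    and "m \<in> U" "0 \<le> a" "a \<le> 1" "0 < s" "u \<in> U"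
    and gauss: "\<forall>p::real^'d. norm p \<le> diameter U / s \<longrightarrow> c \<le> measure std_gauss (ball p (r / s))"
  shows "c \<le> measure (cbo_step U a m s M) (ball u r)"
proof -
  interpret M: prob_space M
    using M by (simp add: borel_prob_on_def)
  interpret G: prob_space "std_gauss :: (real^'d) measure"
    by (rule prob_space_std_gauss)
  have space_M: "space M = UNIV"
    using M sets_eq_imp_space_eq[of M borel] by (simp add: borel_prob_on_def)
  define F where "F = (\<lambda>(v, \<theta>). closest_point U (v + a *\<^sub>R (m - v) + s *\<^sub>R (\<theta>::real^'d)))"
  have F_meas: "F \<in> borel_measurable (M \<Otimes>\<^sub>M std_gauss)"
    unfolding F_def using M U \<open>m \<in> U\<close> by (intro measurable_projected_update) (auto simp: borel_prob_on_def)
  define X where "X = F -` ball u r \<inter> space (M \<Otimes>\<^sub>M std_gauss)"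
  have X: "X \<in> sets (M \<Otimes>\<^sub>M std_gauss)"
    unfolding X_def using F_meas by measurable
  have section_bound: "ennreal c \<le> emeasure std_gauss (Pair v -` X)" if "v \<in> U" for v
  proof -
    define w where "w = v + a *\<^sub>R (m - v)"
    have "w = (1 - a) *\<^sub>R v + a *\<^sub>R m"
      unfolding w_def by (simp add: algebra_simps)
    then have "w \<in> U"
      using convexD[OF U(1) \<open>v \<in> U\<close> \<open>m \<in> U\<close>, of "1 - a" a] \<open>0 \<le> a\<close> \<open>a \<le> 1\<close> by simp
    define p where "p = (1 / s) *\<^sub>R (u - w)"
    have "norm p \<le> diameter U / s"
      using diameter_bounded_bound[OF U(3) \<open>u \<in> U\<close> \<open>w \<in> U\<close>] \<open>0 < s\<close>
      by (simp add: p_def dist_norm divide_right_mono)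
    then have "c \<le> measure std_gauss (ball p (r / s))"
      using gauss by blast
    moreover have "ball p (r / s) \<subseteq> Pair v -` X"
      using ball_subset_closest_point_preimage[OF U(1,2) \<open>u \<in> U\<close> \<open>0 < s\<close>, of w r]
      unfolding p_def X_def F_def w_def by (auto simp: space_pair_measure space_M)
    ultimately show ?thesis
      using sets_Pair1[OF X]
      by (auto simp: G.emeasure_eq_measure intro: order_trans[OF _ G.finite_measure_mono])
  qed
  have "ennreal c = (\<integral>\<^sup>+v. ennreal c \<partial>M)"
    using M.emeasure_space_1 by simp
  also have "\<dots> \<le> (\<integral>\<^sup>+v. emeasure std_gauss (Pair v -` X) \<partial>M)"
    using M section_bound unfolding borel_prob_on_def by (intro nn_integral_mono_AE) (auto elim: eventually_mono)
  also have "\<dots> = emeasure (M \<Otimes>\<^sub>M std_gauss) X"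
    using X by (rule G.emeasure_pair_measure_alt[symmetric])
  also have "\<dots> = emeasure (cbo_step U a m s M) (ball u r)"
    unfolding cbo_step_def X_def F_def[symmetric] using F_meas by (intro emeasure_distr[symmetric]) auto
  also have "\<dots> = ennreal (measure (cbo_step U a m s M) (ball u r))"
    using borel_prob_on_cbo_step[OF M U(1,2), of a m s] \<open>m \<in> U\<close>
    unfolding borel_prob_on_def prob_space_def by (blast intro: finite_measure.emeasure_eq_measure)
  finally show ?thesis
    by (simp add: ennreal_le_iff[OF measure_nonneg])
qed

section \<open>The restarted iteration\<close>

lemma restart_induct:
  fixes f :: "nat \<Rightarrow> nat \<Rightarrow> 'a"
  assumes "P (f 0 0)"
    and step: "\<And>n k. k < kbar \<Longrightarrow> P (f n k) \<Longrightarrow> P (f n (Suc k))"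
    and restart: "\<And>n. f (Suc n) 0 = f n kbar"
    and "k \<le> kbar"
  shows "P (f n k)"
proof -
  have along_n: "P (f n k)" if "P (f n 0)" "k \<le> kbar" for n k
    using that by (induction k) (auto intro: step)
  have "P (f n 0)" for n
    by (induction n) (auto simp: assms(1) restart intro: along_n)
  then show ?thesis
    using along_n \<open>k \<le> kbar\<close> by blast
qed

lemma restart_cases:
  fixes f :: "nat \<Rightarrow> nat \<Rightarrow> 'a"
  assumes restart: "\<And>n. f (Suc n) 0 = f n kbar" and "0 < kbar" "k \<le> kbar"
  obtains "n = 0" "k = 0"
    | n' k' where "k' < kbar" "f n k = f n' (Suc k')"
proof (cases k)
  case 0
  show ?thesis
  proof (cases n)
    case (Suc n')
    then have "f n k = f n' (Suc (kbar - 1))"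
      using restart \<open>k = 0\<close> \<open>0 < kbar\<close> by simp
    then show ?thesis
      using that(2)[of "kbar - 1" n'] \<open>0 < kbar\<close> by simp
  qed (use that(1) \<open>k = 0\<close> in blast)
next
  case (Suc k')
  then show ?thesis
    using that(2)[of k' n] \<open>k \<le> kbar\<close> by simp
qed

lemma projected_cbo_iterates_borel_prob_on:
  fixes f :: "nat \<Rightarrow> nat \<Rightarrow> (real^'d) measure"
  assumes U: "convex U" "closed U"
    and init: "borel_prob_on U (f 0 0)"
    and consensus: "\<And>n M. borel_prob_on U M \<Longrightarrow> m n M \<in> U"
    and step: "\<And>n k. k < kbar \<Longrightarrow> f n (Suc k) = cbo_step U a (m n (f n k)) s (f n k)"
    and restart: "\<And>n. f (Suc n) 0 = f n kbar"
    and "k \<le> kbar"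
  shows "borel_prob_on U (f n k)"
proof (rule restart_induct[where P = "borel_prob_on U", OF init _ restart \<open>k \<le> kbar\<close>])
  fix n k assume "k < kbar" "borel_prob_on U (f n k)"
  then show "borel_prob_on U (f n (Suc k))"
    using consensus[of "f n k" n] U by (auto simp: step intro!: borel_prob_on_cbo_step)
qed

lemma projected_cbo_ball_lower_bound:
  fixes f :: "nat \<Rightarrow> nat \<Rightarrow> (real^'d) measure"
  assumes U: "convex U" "compact U"
    and init: "borel_prob_on U (f 0 0)" "U \<subseteq> msupp (f 0 0)"
    and consensus: "\<And>n M. borel_prob_on U M \<Longrightarrow> m n M \<in> U"
    and step: "\<And>n k. k < kbar \<Longrightarrow> f n (Suc k) = cbo_step U a (m n (f n k)) s (f n k)"
    and restart: "\<And>n. f (Suc n) 0 = f n kbar"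
    and "0 < kbar" "0 \<le> a" "a \<le> 1" "0 < s" "0 < r"
  shows "\<exists>\<delta>>0. \<forall>n k u. k \<le> kbar \<longrightarrow> u \<in> U \<longrightarrow> \<delta> \<le> measure (f n k) (ball u r)"
proof -
  have "closed U" "bounded U"
    using U(2) by (simp_all add: compact_imp_closed compact_imp_bounded)
  note invariant = projected_cbo_iterates_borel_prob_on[OF U(1) \<open>closed U\<close> init(1) consensus step restart]
  obtain c where "0 < c"
    and gauss: "\<forall>p::real^'d. norm p \<le> diameter U / s \<longrightarrow> c \<le> measure std_gauss (ball p (r / s))"
    using std_gauss_ball_lower_bound[of "r / s" "diameter U / s"] \<open>0 < r\<close> \<open>0 < s\<close>
    by (metis divide_pos_pos)
  have after_step: "c \<le> measure (f n (Suc k)) (ball u r)" if "k < kbar" "u \<in> U" for n k u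
  proof -
    have M: "borel_prob_on U (f n k)"
      using invariant that(1) by simp
    show ?thesis
      unfolding step[OF that(1)]
      by (rule cbo_step_ball_lower_bound[OF M U(1) \<open>closed U\<close> \<open>bounded U\<close> consensus[OF M]
            \<open>0 \<le> a\<close> \<open>a \<le> 1\<close> \<open>0 < s\<close> that(2) gauss])
  qed
  obtain \<delta>0 where "0 < \<delta>0" and initial: "\<forall>u\<in>U. \<delta>0 \<le> measure (f 0 0) (ball u r)"
    using msupp_uniform_ball_lower_bound[OF _ _ U(2) init(2) \<open>0 < r\<close>] init(1)
    by (auto simp: borel_prob_on_def prob_space_def)
  have "min \<delta>0 c \<le> measure (f n k) (ball u r)" if "k \<le> kbar" "u \<in> U" for n k u
  proof (rule restart_cases[where f = f and n = n, OF restart \<open>0 < kbar\<close> \<open>k \<le> kbar\<close>])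
    assume "n = 0" "k = 0"
    then show ?thesis
      using initial \<open>u \<in> U\<close> by (simp add: min.coboundedI1)
  next
    fix n' k' assume "k' < kbar" "f n k = f n' (Suc k')"
    then show ?thesis
      using after_step \<open>u \<in> U\<close> by (simp add: min.coboundedI2)
  qed
  then show ?thesis
    using \<open>0 < \<delta>0\<close> \<open>0 < c\<close> by (intro exI[of _ "min \<delta>0 c"]) auto
qed

theorem mainTheorem3:
  fixes X :: "(real^'m) set"
    and umin umax :: "real^'d"
    and \<Phi>s :: "real^'m \<Rightarrow> real^'m"
    and Fc :: "real^'d^'m"
    and \<nu> \<Delta>t \<alpha> lam \<sigma> \<tau> r :: real
    and xref :: "real \<Rightarrow> real^'m"
    and kbar :: nat
    and x :: "nat \<Rightarrow> real^'m"
    and u :: "nat \<Rightarrow> real^'d"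
    and f :: "nat \<Rightarrow> nat \<Rightarrow> (real^'d) measure"
  defines "U \<equiv> box_set umin umax"
  defines "L \<equiv> (\<lambda>n. mpc_cost \<Phi>s Fc \<nu> (x n) (xref (real (Suc n) * \<Delta>t)))"
  assumes umin_umax: "\<forall>i. umin $ i < umax $ i"
    and \<Phi>s_maps: "\<forall>y\<in>X. \<Phi>s y \<in> X"
    and \<nu>_pos: "\<nu> > 0"
    and A_rank: "rank (transpose Fc ** Fc + \<nu> *\<^sub>R mat 1) = CARD('d)"
    and \<Delta>t_pos: "\<Delta>t > 0"
    and xref_in: "\<forall>n::nat. xref (real n * \<Delta>t) \<in> X"
    and params: "\<alpha> > 0" "lam > 0" "\<sigma> > 0" "\<tau> > 0" "lam * \<tau> < 1"
    and kbar_pos: "kbar \<ge> 1"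
    and x0: "x 0 \<in> X"
    and f00_prob: "prob_space (f 0 0)"
    and f00_sets: "sets (f 0 0) = sets borel"
    and f00_supp: "msupp (f 0 0) = U"
    and f_step: "\<forall>n k. k < kbar \<longrightarrow>
        f n (Suc k) = distr (f n k \<Otimes>\<^sub>M std_gauss) borel
          (\<lambda>(v, \<theta>). closest_point U
             (v + (lam * \<tau>) *\<^sub>R (cons_point \<alpha> (L n) (f n k) - v) + (\<sigma> * sqrt \<tau>) *\<^sub>R \<theta>))"
    and u_def: "\<forall>n. u n = cons_point \<alpha> (L n) (f n kbar)"
    and x_step: "\<forall>n. x (Suc n) = \<Phi>s (x n) + Fc *v u n"
    and f_restart: "\<forall>n. f (Suc n) 0 = f n kbar"
    and r_pos: "r > 0"
  shows "\<exists>\<delta>>0. \<forall>n k. k \<le> kbar \<longrightarrow>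
           (\<forall>ustar. ustar \<in> U \<and> (\<forall>v\<in>U. L n ustar \<le> L n v) \<longrightarrow>
              measure (f n k) (ball ustar r) \<ge> \<delta>)"
proof -
  have U: "convex U" "compact U"
    unfolding U_def box_set_eq_cbox by simp_all
  have init: "borel_prob_on U (f 0 0)"
    using f00_prob f00_sets AE_in_msupp[OF f00_sets] unfolding f00_supp borel_prob_on_def by blast
  have consensus: "cons_point \<alpha> (L n) M \<in> U" if "borel_prob_on U M" for n M
    using that params(1) \<nu>_pos unfolding U_def L_def borel_prob_on_def
    by (intro cons_point_mpc_cost_in_box_set) auto
  have step: "f n (Suc k) = cbo_step U (lam * \<tau>) (cons_point \<alpha> (L n) (f n k)) (\<sigma> * sqrt \<tau>) (f n k)"
    if "k < kbar" for n k
    using f_step that unfolding cbo_step_def by blast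
  have "0 < kbar" "0 \<le> lam * \<tau>" "lam * \<tau> \<le> 1" "0 < \<sigma> * sqrt \<tau>"
    using kbar_pos params by simp_all
  then obtain \<delta> where "0 < \<delta>" "\<forall>n k u. k \<le> kbar \<longrightarrow> u \<in> U \<longrightarrow> \<delta> \<le> measure (f n k) (ball u r)"
    using projected_cbo_ball_lower_bound[where m = "\<lambda>n. cons_point \<alpha> (L n)", OF U init
        f00_supp[THEN equalityD2] consensus step f_restart[rule_format] _ _ _ _ r_pos]
    by blast
  then show ?thesis
    by blast
qed

end
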